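(* Let $\mathcal H$ be a complex Hilbert space of dimension $n$, let $m\ge 1$ and $k>1$ be integers, and let $\mathbf A=(A_1,\dots,A_m)$ be an $m$-tuple of bounded self-adjoint operators on $\mathcal H$. If $n\ge (k-1)(m+1)^2$, then $\Lambda_k(\mathbf A)\neq\emptyset$.
   Context: For an $m$-tuple $\mathbf A=(A_1,\dots,A_m)$ of bounded self-adjoint operators on a complex Hilbert space $\mathcal H$ and a positive integer $k$, the joint rank-$k$ numerical range is $\Lambda_k(\mathbf A)=\{(a_1,\dots,a_m)\in\mathbb R^m:$ there is an orthogonal projection $P$ of rank $k$ on $\mathcal H$ with $PA_jP=a_jP$ for $j=1,\dots,m\}$. *)

theory Defs
  imports "HOL-Analysis.Analysis"
begin

text \<open>The Hilbert space of dimension n is modelled as complex^'n with CARD('n) = n;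
  bounded operators on it are complex matrices complex^'n^'n acting by *v.\<close>

definition cmat_adjoint :: "complex^'n^'m \<Rightarrow> complex^'m^'n" where
  "cmat_adjoint A = (\<chi> i j. cnj (A $ j $ i))"

definition self_adjoint :: "complex^'n^'n \<Rightarrow> bool" where
  "self_adjoint A \<longleftrightarrow> cmat_adjoint A = A"

definition orth_projection :: "complex^'n^'n \<Rightarrow> bool" where
  "orth_projection P \<longleftrightarrow> self_adjoint P \<and> P ** P = P"

text \<open>Joint rank-k numerical range of an m-tuple (list of length m) of operators;
  points of R^m are represented as real lists of length m.\<close>

definition joint_rank_k_numrange :: "nat \<Rightarrow> (complex^'n^'n) list \<Rightarrow> real list set" where
  "joint_rank_k_numrange k As =
     {a. length a = length As \<and>
         (\<exists>P. orth_projection P \<and> rank P = k \<and>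
              (\<forall>j < length As. P ** (As ! j) ** P = (a ! j) *\<^sub>R P))}"

end

theory Submission
  imports Defs
begin

text \<open>Put \<open>N = (k - 1) * (m + 1) + 1\<close>. Choose orthonormal vectors \<open>z 0, \<dots>, z (N - 1)\<close>
  with \<open>\<langle>z i, A z l\<rangle> = 0\<close> for \<open>i \<noteq> l\<close> and every \<open>A\<close> in the tuple: greedily, each new vector
  only has to avoid the fewer than \<open>n\<close> vectors \<open>z l\<close>, \<open>A z l\<close>, one constraint being saved by
  taking \<open>z 0\<close> an eigenvector of some \<open>A\<close>. The diagonal values \<open>x i = (\<langle>z i, A\<^sub>j z i\<rangle>)\<^sub>j\<close>
  are \<open>N\<close> points of \<open>\<real>\<^sup>m\<close>, so by Tverberg's theorem (obtained from B\'ar\'any's colourful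
  Carath\'eodory theorem through Sarkaria's lifting) they split into \<open>k\<close> classes whose convex
  hulls share a point \<open>a\<close>. If \<open>\<lambda> i\<close> are the convex weights, the vectors
  \<open>v p = \<Sum>\<^bsub>i in class p\<^esub> sqrt (\<lambda> i) z i\<close> are orthonormal and satisfy
  \<open>\<langle>v p, A\<^sub>j v q\<rangle> = \<delta>\<^sub>p\<^sub>q a\<^sub>j\<close>, so the projection onto their span has rank \<open>k\<close> and
  compresses every \<open>A\<^sub>j\<close> to \<open>a\<^sub>j\<close>.\<close>

section \<open>Colourful Carath\'eodory theorem\<close>

lemma closest_point_in_face_hull:
  fixes T :: "'a::euclidean_space set"
  assumes "finite T" "T \<noteq> {}"
  defines "p \<equiv> closest_point (convex hull T) 0"
  shows "p \<in> convex hull (T \<inter> {x. inner p x = inner p p})"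
proof -
  have K: "convex (convex hull T)" "closed (convex hull T)"
    using assms(1) by (auto simp: compact_imp_closed compact_convex_hull finite_imp_compact)
  have pK: "p \<in> convex hull T"
    unfolding p_def using closest_point_in_set[OF K(2)] assms(2) by simp
  have ge: "inner p p \<le> inner p x" if "x \<in> T" for x
  proof -
    have "inner (0 - p) (x - p) \<le> 0"
      using any_closest_point_dot[OF K pK hull_inc[OF that]] closest_point_le[OF K(2)]
      unfolding p_def by blast
    then show ?thesis by (simp add: inner_diff_right)
  qed
  obtain u where u: "\<forall>x\<in>T. 0 \<le> u x" "sum u T = 1" "(\<Sum>x\<in>T. u x *\<^sub>R x) = p"
    using pK unfolding convex_hull_finite[OF assms(1)] by auto
  have "(\<Sum>x\<in>T. u x * (inner p x - inner p p)) = inner p (\<Sum>x\<in>T. u x *\<^sub>R x) - sum u T * inner p p"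
    by (simp add: right_diff_distrib sum_subtractf sum_distrib_right inner_sum_right)
  also have "\<dots> = 0" using u(2,3) by simp
  finally have "u x * (inner p x - inner p p) = 0" if "x \<in> T" for x
    using sum_nonneg_eq_0_iff[OF assms(1), of "\<lambda>x. u x * (inner p x - inner p p)"] u(1) ge that
    by auto
  then have off_face: "u x = 0" if "x \<in> T" "inner p x \<noteq> inner p p" for x
    using that by auto
  let ?F = "T \<inter> {x. inner p x = inner p p}"
  have "sum u ?F = sum u T" "(\<Sum>x\<in>?F. u x *\<^sub>R x) = (\<Sum>x\<in>T. u x *\<^sub>R x)"
    by (intro sum.mono_neutral_left; use assms(1) off_face in force)+
  then have "sum u ?F = 1" "(\<Sum>x\<in>?F. u x *\<^sub>R x) = p"
    using u(2,3) by simp_all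
  moreover have "finite ?F" using assms(1) by simp
  ultimately show ?thesis
    using u(1) unfolding convex_hull_finite[OF \<open>finite ?F\<close>] by (intro CollectI exI[of _ u]) auto
qed

lemma closest_point_in_small_hull:
  fixes T :: "'a::euclidean_space set"
  assumes "finite T" "T \<noteq> {}" "subspace V" "T \<subseteq> V"
    and p0: "closest_point (convex hull T) 0 \<noteq> 0"
  shows "\<exists>S\<subseteq>T. card S \<le> dim V \<and> closest_point (convex hull T) 0 \<in> convex hull S"
proof -
  define p where "p = closest_point (convex hull T) 0"
  define F where "F = T \<inter> {x. inner p x = inner p p}"
  obtain S where S: "S \<subseteq> F" "card S \<le> aff_dim F + 1" "p \<in> convex hull S"
    using closest_point_in_face_hull[OF assms(1,2)] caratheodory_aff_dim[of F]
    unfolding p_def F_def by blast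
  have "affine hull F \<subseteq> {x. inner p x = inner p p}"
    unfolding F_def by (intro hull_minimal affine_hyperplane) auto
  then have "0 \<notin> affine hull F" using p0 unfolding p_def by auto
  then have "aff_dim F + 1 = aff_dim (insert 0 F)" by (simp add: aff_dim_insert)
  also have "\<dots> \<le> aff_dim V"
    using assms(3,4) subspace_0 unfolding F_def by (intro aff_dim_subset) auto
  also have "\<dots> = int (dim V)" by (rule aff_dim_subspace[OF assms(3)])
  finally show ?thesis using S unfolding p_def F_def by auto
qed

lemma colorful_selection_improve:
  fixes C :: "'i \<Rightarrow> 'a::euclidean_space set"
  assumes "finite I" "subspace V" "dim V < card I"
    and "\<And>i. i \<in> I \<Longrightarrow> C i \<subseteq> V" "\<And>i. i \<in> I \<Longrightarrow> 0 \<in> convex hull (C i)"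
    and f0: "f0 \<in> PiE I C" and not_zero: "0 \<notin> convex hull (f0 ` I)"
  shows "\<exists>f1\<in>PiE I C. norm (closest_point (convex hull (f1 ` I)) 0)
                     < norm (closest_point (convex hull (f0 ` I)) 0)"
proof -
  define p where "p = closest_point (convex hull (f0 ` I)) 0"
  have "I \<noteq> {}" using assms(3) by auto
  have hull_closed: "closed (convex hull (f ` I))" for f :: "'i \<Rightarrow> 'a"
    using assms(1) by (simp add: compact_imp_closed compact_convex_hull finite_imp_compact)
  have "p \<in> convex hull (f0 ` I)"
    unfolding p_def using closest_point_in_set[OF hull_closed] \<open>I \<noteq> {}\<close> by simp
  then have "p \<noteq> 0" using not_zero by auto
  then obtain S where S: "S \<subseteq> f0 ` I" "card S \<le> dim V" "p \<in> convex hull S"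
    using closest_point_in_small_hull[of "f0 ` I" V] assms(1,2,4) f0 \<open>I \<noteq> {}\<close>
    unfolding p_def by (force simp: PiE_iff)
  then obtain J where J: "J \<subseteq> I" "inj_on f0 J" "S = f0 ` J"
    by (auto simp: subset_image_inj)
  then have "card J < card I" using S(2) assms(3) by (simp add: card_image)
  then obtain i0 where i0: "i0 \<in> I" "i0 \<notin> J"
    using J(1) by (metis psubsetI psubset_card_mono less_irrefl subset_antisym assms(1) subsetI)
  have "\<not> C i0 \<subseteq> {x. inner p x > 0}"
  proof
    assume "C i0 \<subseteq> {x. inner p x > 0}"
    then have "convex hull (C i0) \<subseteq> {x. inner p x > 0}"
      by (intro hull_minimal) (auto simp: convex_halfspace_gt)
    then show False using assms(5)[OF i0(1)] by auto
  qed
  then obtain c where c: "c \<in> C i0" "\<not> inner p c > 0" by blast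
  define f1 where "f1 = f0(i0 := c)"
  define K1 where "K1 = convex hull (f1 ` I)"
  have f1: "f1 \<in> PiE I C" using f0 c(1) i0(1) unfolding f1_def by (auto simp: PiE_iff extensional_def)
  have "S = f1 ` J" using J(3) i0(2) unfolding f1_def by (auto simp: image_def)
  then have "S \<subseteq> f1 ` I" using J(1) by auto
  then have pK1: "p \<in> K1" using S(3) hull_mono unfolding K1_def by blast
  have "c = f1 i0" unfolding f1_def by simp
  then have cK1: "c \<in> K1" unfolding K1_def using i0(1) by (simp add: hull_inc)
  have "norm (closest_point K1 0) < norm p"
  proof (rule ccontr)
    assume "\<not> ?thesis"
    \<comment> \<open>Then \<open>p\<close> is also nearest to \<open>0\<close> in \<open>K1\<close>, which puts \<open>c\<close> beyond \<open>p\<close>.\<close>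
    then have "norm p \<le> norm q" if "q \<in> K1" for q
      using closest_point_le[OF hull_closed that[unfolded K1_def], of 0]
      unfolding K1_def by (simp add: dist_norm)
    then have "inner (0 - p) (c - p) \<le> 0"
      using any_closest_point_dot[OF _ _ pK1 cK1, of 0] hull_closed unfolding K1_def
      by (simp add: convex_convex_hull dist_norm)
    moreover have "0 < inner p p" using \<open>p \<noteq> 0\<close> by simp
    ultimately show False using c(2) by (simp add: inner_diff_right)
  qed
  then show ?thesis using f1 unfolding K1_def p_def by blast
qed

theorem colorful_caratheodory:
  fixes C :: "'i \<Rightarrow> 'a::euclidean_space set"
  assumes "finite I" "subspace V" "dim V < card I"
    and "\<And>i. i \<in> I \<Longrightarrow> finite (C i)" "\<And>i. i \<in> I \<Longrightarrow> C i \<subseteq> V"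
    and "\<And>i. i \<in> I \<Longrightarrow> 0 \<in> convex hull (C i)"
  shows "\<exists>f. (\<forall>i\<in>I. f i \<in> C i) \<and> 0 \<in> convex hull (f ` I)"
proof -
  define dist0 where "dist0 f = norm (closest_point (convex hull (f ` I)) 0)" for f :: "'i \<Rightarrow> 'a"
  have "C i \<noteq> {}" if "i \<in> I" for i using assms(6)[OF that] by auto
  then have "PiE I C \<noteq> {}" by (simp add: PiE_eq_empty_iff)
  moreover have "finite (PiE I C)" using assms(1,4) by (simp add: finite_PiE)
  ultimately obtain f0 where f0: "f0 \<in> PiE I C" and f0_min: "\<And>f. f \<in> PiE I C \<Longrightarrow> dist0 f0 \<le> dist0 f"
    using arg_min_if_finite[of "PiE I C" dist0] by (metis arg_min_least)
  have "0 \<in> convex hull (f0 ` I)"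
    using colorful_selection_improve[OF assms(1,2,3,5,6) f0] f0_min not_less
    unfolding dist0_def by blast
  then show ?thesis using f0 by (auto simp: PiE_iff)
qed

section \<open>Tverberg's theorem\<close>

lemma convex_hull_image_subset_combinations:
  fixes f :: "'i \<Rightarrow> 'a::real_vector"
  assumes "finite I"
  shows "convex hull (f ` I) \<subseteq> {\<Sum>i\<in>I. l i *\<^sub>R f i | l. (\<forall>i\<in>I. 0 \<le> l i) \<and> sum l I = 1}"
proof (rule hull_minimal)
  show "f ` I \<subseteq> {\<Sum>i\<in>I. l i *\<^sub>R f i | l. (\<forall>i\<in>I. 0 \<le> l i) \<and> sum l I = 1}"
  proof (intro subsetI, elim imageE)
    fix x i assume "x = f i" "i \<in> I"
    then show "x \<in> {\<Sum>i\<in>I. l i *\<^sub>R f i | l. (\<forall>i\<in>I. 0 \<le> l i) \<and> sum l I = 1}"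
      using assms by (intro CollectI exI[of _ "\<lambda>j. if j = i then 1 else 0"])
        (simp add: if_distrib[of "\<lambda>c. c *\<^sub>R f _"] sum.delta cong: if_cong)
  qed
  show "convex {\<Sum>i\<in>I. l i *\<^sub>R f i | l. (\<forall>i\<in>I. 0 \<le> l i) \<and> sum l I = 1}"
  proof (rule convexI, elim CollectE exE conjE)
    fix u v :: real and x y l1 l2
    assume "0 \<le> u" "0 \<le> v" "u + v = 1"
      and "x = (\<Sum>i\<in>I. l1 i *\<^sub>R f i)" "\<forall>i\<in>I. 0 \<le> l1 i" "sum l1 I = 1"
      and "y = (\<Sum>i\<in>I. l2 i *\<^sub>R f i)" "\<forall>i\<in>I. 0 \<le> l2 i" "sum l2 I = 1"
    then show "u *\<^sub>R x + v *\<^sub>R y \<in> {\<Sum>i\<in>I. l i *\<^sub>R f i | l. (\<forall>i\<in>I. 0 \<le> l i) \<and> sum l I = 1}"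
      by (intro CollectI exI[of _ "\<lambda>i. u * l1 i + v * l2 i"])
        (simp add: sum.distrib scaleR_add_left scaleR_sum_right flip: sum_distrib_left)
  qed
qed

text \<open>Restricted to \<open>s < k - 1\<close>, the \<open>k\<close> functions \<open>sarkaria_coeff k j\<close> (\<open>j < k\<close>) are the unit
  vectors of \<open>\<real>\<^sup>k\<^sup>-\<^sup>1\<close> and minus their sum; their only linear relations are the constant ones.\<close>
definition sarkaria_coeff :: "nat \<Rightarrow> nat \<Rightarrow> nat \<Rightarrow> real" where
  "sarkaria_coeff k j s = (if j = s then 1 else if j = k - 1 then -1 else 0)"

lemma sum_sarkaria_coeff:
  assumes "s < k - 1"
  shows "(\<Sum>j<k. sarkaria_coeff k j s * w j) = w s - w (k - 1)"
proof -
  have "(\<Sum>j<k. sarkaria_coeff k j s * w j)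
      = (\<Sum>j<k. (if j = s then w j else 0) + (if j = k - 1 then - w j else 0))"
    using assms by (intro sum.cong) (auto simp: sarkaria_coeff_def)
  also have "\<dots> = w s - w (k - 1)" using assms by (simp add: sum.distrib)
  finally show ?thesis .
qed

lemma sarkaria_relation_imp_equal_classes:
  assumes "finite I" "\<forall>i\<in>I. g i < k"
    and "\<And>s. s < k - 1 \<Longrightarrow> (\<Sum>i\<in>I. w i * sarkaria_coeff k (g i) s) = 0"
    and "j < k"
  shows "(\<Sum>i | i \<in> I \<and> g i = j. w i) = (\<Sum>i | i \<in> I \<and> g i = k - 1. w i)"
proof (cases "j = k - 1")
  case False
  then have "j < k - 1" using assms(4) by simp
  have "0 = (\<Sum>i\<in>I. w i * sarkaria_coeff k (g i) j)" using assms(3)[OF \<open>j < k - 1\<close>] by simp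
  also have "\<dots> = (\<Sum>c<k. \<Sum>i | i \<in> I \<and> g i = c. w i * sarkaria_coeff k (g i) j)"
    using assms(1,2) by (intro sum.group[symmetric]) auto
  also have "\<dots> = (\<Sum>c<k. sarkaria_coeff k c j * (\<Sum>i | i \<in> I \<and> g i = c. w i))"
    by (simp add: sum_distrib_left mult.commute)
  also have "\<dots> = (\<Sum>i | i \<in> I \<and> g i = j. w i) - (\<Sum>i | i \<in> I \<and> g i = k - 1. w i)"
    by (rule sum_sarkaria_coeff[OF \<open>j < k - 1\<close>])
  finally show ?thesis by simp
qed simp

definition tensor_embed ::
    "(nat \<times> nat \<Rightarrow> 'd) \<Rightarrow> (nat \<times> nat) set \<Rightarrow> (nat \<Rightarrow> real) \<Rightarrow> (nat \<Rightarrow> real) \<Rightarrow> real^'d"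
  where "tensor_embed e P y u = (\<Sum>(r, s)\<in>P. (y r * u s) *\<^sub>R axis (e (r, s)) 1)"

lemma tensor_embed_component:
  assumes "inj_on e P" "finite P" "(r, s) \<in> P"
  shows "tensor_embed e P y u $ e (r, s) = y r * u s"
proof -
  have "tensor_embed e P y u $ e (r, s) = (\<Sum>p\<in>P. if p = (r, s) then y (fst p) * u (snd p) else 0)"
    unfolding tensor_embed_def sum_component case_prod_beta
    by (intro sum.cong) (use assms(1,3) in \<open>auto simp: axis_def inj_on_eq_iff\<close>)
  also have "\<dots> = y r * u s" using assms(2,3) by (simp add: sum.delta')
  finally show ?thesis .
qed

lemma tensor_embed_sum_right:
  "tensor_embed e P y (\<lambda>s. \<Sum>j\<in>J. c j * u j s) = (\<Sum>j\<in>J. c j *\<^sub>R tensor_embed e P y (u j))"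
  unfolding tensor_embed_def scaleR_sum_right
  by (subst sum.swap) (simp add: case_prod_beta sum_distrib_left scaleR_sum_left mult.left_commute)

lemma tensor_embed_zero_right: "tensor_embed e P y (\<lambda>_. 0) = 0"
  by (simp add: tensor_embed_def case_prod_beta)

lemma tensor_embed_in_span: "tensor_embed e P y u \<in> span ((\<lambda>p. axis (e p) 1) ` P)"
  unfolding tensor_embed_def case_prod_beta
  by (intro span_sum span_scale span_base) auto

lemma tensor_embed_cong:
  "(\<And>r s. (r, s) \<in> P \<Longrightarrow> u s = u' s) \<Longrightarrow> tensor_embed e P y u = tensor_embed e P y u'"
  unfolding tensor_embed_def by (intro sum.cong) auto

lemma zero_in_convex_hull_sarkaria_lift:
  assumes "k \<ge> 1" "\<And>r s. (r, s) \<in> P \<Longrightarrow> s < k - 1"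
  shows "0 \<in> convex hull ((\<lambda>j. tensor_embed e P y (sarkaria_coeff k j)) ` {..<k})"
proof -
  let ?lift = "\<lambda>j. tensor_embed e P y (sarkaria_coeff k j)"
  have "(\<Sum>j<k. (1 / k) *\<^sub>R ?lift j) \<in> convex hull (?lift ` {..<k})"
    using assms(1) by (intro convex_sum) (auto simp: hull_inc)
  moreover have "(\<Sum>j<k. (1 / k) *\<^sub>R ?lift j) = 0"
    unfolding tensor_embed_sum_right[symmetric]
    by (subst tensor_embed_zero_right[symmetric], rule tensor_embed_cong)
      (auto dest: assms(2) simp: sum_sarkaria_coeff[where w = "\<lambda>_. 1 / k", simplified] mult.commute)
  ultimately show ?thesis by simp
qed

lemma equal_class_sums_imp_common_point:
  fixes l :: "nat \<Rightarrow> real" and g :: "nat \<Rightarrow> nat"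
  assumes "\<forall>i<N. g i < k \<and> 0 \<le> l i" "sum l {..<N} = 1"
    and "\<And>j. j < k \<Longrightarrow> (\<Sum>i | i < N \<and> g i = j. l i) = (\<Sum>i | i < N \<and> g i = k - 1. l i)"
    and "\<And>j r. j < k \<Longrightarrow> r < m \<Longrightarrow>
      (\<Sum>i | i < N \<and> g i = j. l i * x i r) = (\<Sum>i | i < N \<and> g i = k - 1. l i * x i r)"
  shows "\<exists>lam a. (\<forall>i<N. lam i \<ge> 0) \<and>
     (\<forall>j<k. (\<Sum>i | i < N \<and> g i = j. lam i) = 1 \<and>
            (\<forall>r<m. (\<Sum>i | i < N \<and> g i = j. lam i * x i r) = a r))"
proof -
  define c where "c = (\<Sum>i | i < N \<and> g i = k - 1. l i)"
  have "sum l {..<N} = (\<Sum>j<k. \<Sum>i | i \<in> {..<N} \<and> g i = j. l i)"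
    using assms(1) by (intro sum.group[symmetric]) auto
  then have "1 = (\<Sum>j<k. \<Sum>i | i < N \<and> g i = j. l i)" using assms(2) by simp
  also have "\<dots> = (\<Sum>j<k. c)" unfolding c_def by (intro sum.cong refl assms(3)) simp
  also have "\<dots> = real k * c" by simp
  finally have kc: "real k * c = 1" by simp
  show ?thesis
  proof (intro exI conjI allI impI)
    fix i assume "i < N" then show "0 \<le> real k * l i" using assms(1) by simp
  next
    fix j assume "j < k"
    then show "(\<Sum>i | i < N \<and> g i = j. real k * l i) = 1"
      using assms(3)[OF \<open>j < k\<close>] kc by (simp add: c_def flip: sum_distrib_left)
    fix r assume "r < m"
    then show "(\<Sum>i | i < N \<and> g i = j. real k * l i * x i r)
        = real k * (\<Sum>i | i < N \<and> g i = k - 1. l i * x i r)"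
      using assms(4)[OF \<open>j < k\<close> \<open>r < m\<close>] by (simp add: mult.assoc flip: sum_distrib_left)
  qed
qed

lemma sarkaria_selection:
  fixes y :: "nat \<Rightarrow> nat \<Rightarrow> real"
  assumes "k \<ge> 1" and "(k - 1) * (m + 1) \<le> CARD('d::finite)"
  defines "N \<equiv> (k - 1) * (m + 1) + 1"
  shows "\<exists>g l. (\<forall>i<N. g i < k \<and> 0 \<le> l i) \<and> sum l {..<N} = 1 \<and>
     (\<forall>r\<le>m. \<forall>s<k - 1. (\<Sum>i<N. l i * y i r * sarkaria_coeff k (g i) s) = 0)"
proof -
  define P where "P = {..m} \<times> {..<k - 1}"
  have "finite P" by (simp add: P_def)
  have "card P \<le> card (UNIV :: 'd set)"
    using assms(2) by (simp add: P_def card_cartesian_product mult.commute)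
  then obtain e :: "nat \<times> nat \<Rightarrow> 'd" where e: "inj_on e P"
    using card_le_inj[of P "UNIV :: 'd set"] \<open>finite P\<close> by auto
  define lift where "lift i j = tensor_embed e P (y i) (sarkaria_coeff k j)" for i j
  define V where "V = span ((\<lambda>p. axis (e p) (1::real)) ` P)"
  have "dim V \<le> card ((\<lambda>p. axis (e p) (1::real)) ` P)"
    unfolding V_def using \<open>finite P\<close> by (simp add: dim_le_card')
  also have "\<dots> \<le> card P" by (rule card_image_le[OF \<open>finite P\<close>])
  also have "\<dots> < card {..<N}" by (simp add: P_def N_def card_cartesian_product mult.commute)
  finally have dim: "dim V < card {..<N}" .
  have lift_span: "lift i ` {..<k} \<subseteq> V" for i
    unfolding lift_def V_def using tensor_embed_in_span by blast
  have lift_balanced: "0 \<in> convex hull (lift i ` {..<k})" for i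
    unfolding lift_def using assms(1) by (intro zero_in_convex_hull_sarkaria_lift) (auto simp: P_def)
  have "\<exists>f. (\<forall>i\<in>{..<N}. f i \<in> lift i ` {..<k}) \<and> 0 \<in> convex hull (f ` {..<N})"
    by (rule colorful_caratheodory[OF finite_lessThan _ dim])
      (simp_all add: V_def lift_span[unfolded V_def] lift_balanced)
  then obtain f where f: "\<forall>i\<in>{..<N}. f i \<in> lift i ` {..<k}" "0 \<in> convex hull (f ` {..<N})"
    by blast
  obtain l where l: "\<forall>i\<in>{..<N}. 0 \<le> l i" "sum l {..<N} = 1" "0 = (\<Sum>i<N. l i *\<^sub>R f i)"
    using subsetD[OF convex_hull_image_subset_combinations[OF finite_lessThan] f(2)] by blast
  have "\<forall>i<N. \<exists>j. j < k \<and> f i = lift i j" using f(1) by auto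
  then obtain g where g: "\<forall>i<N. g i < k \<and> f i = lift i (g i)"
    by (metis bchoice)
  have "(\<Sum>i<N. l i * y i r * sarkaria_coeff k (g i) s) = 0" if "(r, s) \<in> P" for r s
  proof -
    have "(\<Sum>i<N. l i * y i r * sarkaria_coeff k (g i) s) = (\<Sum>i<N. l i *\<^sub>R f i) $ e (r, s)"
      unfolding sum_component
      by (intro sum.cong) (use g in \<open>auto simp: lift_def tensor_embed_component[OF e \<open>finite P\<close> that]\<close>)
    then show ?thesis using l(3) by simp
  qed
  then show ?thesis using g l(1,2) by (intro exI[of _ g] exI[of _ l]) (auto simp: P_def)
qed

text \<open>The type \<open>'d\<close> only supplies an ambient space of dimension \<open>(k - 1) * (m + 1)\<close>
  for Sarkaria's lifting.\<close>
theorem tverberg: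
  fixes x :: "nat \<Rightarrow> nat \<Rightarrow> real"
  assumes "k \<ge> 1" and "(k - 1) * (m + 1) \<le> CARD('d::finite)"
  defines "N \<equiv> (k - 1) * (m + 1) + 1"
  shows "\<exists>g lam a. (\<forall>i<N. g i < k \<and> lam i \<ge> 0) \<and>
     (\<forall>j<k. (\<Sum>i | i < N \<and> g i = j. lam i) = 1 \<and>
            (\<forall>r<m. (\<Sum>i | i < N \<and> g i = j. lam i * x i r) = a r))"
proof -
  \<comment> \<open>Appending the coordinate \<open>1\<close> turns equal weighted coordinate sums into equal class weights.\<close>
  define y where "y i r = (if r < m then x i r else 1)" for i r
  obtain g l where g: "\<forall>i<N. g i < k \<and> 0 \<le> l i" "sum l {..<N} = 1"
    and relation: "\<forall>r\<le>m. \<forall>s<k - 1. (\<Sum>i<N. l i * y i r * sarkaria_coeff k (g i) s) = 0"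
    using sarkaria_selection[OF assms(1,2), of y] unfolding N_def by blast
  have class_sums: "(\<Sum>i | i < N \<and> g i = j. l i * y i r) = (\<Sum>i | i < N \<and> g i = k - 1. l i * y i r)"
    if "j < k" "r \<le> m" for j r
    using sarkaria_relation_imp_equal_classes[of "{..<N}" g k "\<lambda>i. l i * y i r" j] g(1) relation that
    by (simp add: mult.assoc)
  have "\<exists>lam a. (\<forall>i<N. lam i \<ge> 0) \<and>
     (\<forall>j<k. (\<Sum>i | i < N \<and> g i = j. lam i) = 1 \<and>
            (\<forall>r<m. (\<Sum>i | i < N \<and> g i = j. lam i * x i r) = a r))"
  proof (rule equal_class_sums_imp_common_point[OF g])
    show "(\<Sum>i | i < N \<and> g i = j. l i) = (\<Sum>i | i < N \<and> g i = k - 1. l i)" if "j < k" for j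
      using class_sums[OF that order_refl] by (simp add: y_def)
    show "(\<Sum>i | i < N \<and> g i = j. l i * x i r) = (\<Sum>i | i < N \<and> g i = k - 1. l i * x i r)"
      if "j < k" "r < m" for j r
      using class_sums[OF that(1) less_imp_le[OF that(2)]] that(2) by (simp add: y_def)
  qed
  then show ?thesis using g by blast
qed

section \<open>Orthonormal families diagonalizing self-adjoint matrices\<close>

definition cinner :: "complex^'n \<Rightarrow> complex^'n \<Rightarrow> complex" where
  "cinner x y = (\<Sum>i\<in>UNIV. cnj (x $ i) * y $ i)"

lemma cinner_commute: "cinner y x = cnj (cinner x y)"
  by (simp add: cinner_def mult.commute)

lemma cinner_scaleC_right: "cinner x (c *s y) = c * cinner x y"
  by (simp add: cinner_def sum_distrib_left mult.left_commute)

lemma cinner_scaleC_left: "cinner (c *s x) y = cnj c * cinner x y"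
  by (simp add: cinner_def sum_distrib_left mult.assoc)

lemma cinner_sum_right: "cinner x (\<Sum>i\<in>S. f i) = (\<Sum>i\<in>S. cinner x (f i))"
  by (simp add: cinner_def sum_component sum_distrib_left) (rule sum.swap)

lemma cinner_sum_left: "cinner (\<Sum>i\<in>S. f i) y = (\<Sum>i\<in>S. cinner (f i) y)"
  by (simp add: cinner_def sum_component sum_distrib_right) (rule sum.swap)

lemma Re_cinner: "Re (cinner x y) = inner x y"
  by (simp add: cinner_def inner_vec_def inner_complex_def Re_sum)

lemma Im_cinner: "Im (cinner x y) = inner (\<i> *s x) y"
  by (simp add: cinner_def inner_vec_def inner_complex_def Im_sum)

lemma cinner_self: "cinner x x = of_real (norm x ^ 2)"
proof -
  have "Im (cinner x x) = 0" using cinner_commute[of x x] by (metis cnj.simps(2) neg_equal_zero)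
  then show ?thesis using Re_cinner[of x x] by (simp add: complex_eq_iff power2_norm_eq_inner)
qed

lemma of_real_scaleC: "complex_of_real c *s (x::complex^'n) = c *\<^sub>R x"
  unfolding vec_eq_iff
  by (simp only: vector_smult_component vector_scaleR_component) (simp add: scaleR_conv_of_real)

lemma matrix_vector_scaleR: "(A::complex^'n^'m) *v (c *\<^sub>R x) = c *\<^sub>R (A *v x)"
  by (simp add: vec_eq_iff matrix_vector_mult_def scaleR_sum_right)

lemma matrix_vector_scaleC: "(A::complex^'n^'m) *v (c *s x) = c *s (A *v x)"
  by (simp add: vec_eq_iff matrix_vector_mult_def sum_distrib_left mult.left_commute)

lemma matrix_vector_sum: "(A::complex^'n^'m) *v (\<Sum>i\<in>S. f i) = (\<Sum>i\<in>S. A *v f i)"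
  by (simp add: vec_eq_iff matrix_vector_mult_def sum_distrib_left sum_component) (intro allI, rule sum.swap)

lemma self_adjoint_entry: "self_adjoint A \<Longrightarrow> cnj (A $ j $ i) = A $ i $ j"
  unfolding self_adjoint_def cmat_adjoint_def by (metis vec_lambda_beta)

lemma self_adjoint_cinner:
  assumes "self_adjoint A"
  shows "cinner x (A *v y) = cinner (A *v x) y"
proof -
  have "cinner x (A *v y) = (\<Sum>i\<in>UNIV. \<Sum>j\<in>UNIV. cnj (x $ i) * A $ i $ j * y $ j)"
    by (simp add: cinner_def matrix_vector_mult_def sum_distrib_left mult.assoc)
  also have "\<dots> = (\<Sum>j\<in>UNIV. \<Sum>i\<in>UNIV. cnj (x $ i) * A $ i $ j * y $ j)"
    by (rule sum.swap)
  also have "\<dots> = cinner (A *v x) y"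
    unfolding cinner_def matrix_vector_mult_def
    by (simp add: sum_distrib_right sum_distrib_left self_adjoint_entry[OF assms]
        mult.commute mult.left_commute)
  finally show ?thesis .
qed

lemma self_adjoint_inner: "self_adjoint A \<Longrightarrow> inner x (A *v y) = inner (A *v x) y"
  using self_adjoint_cinner Re_cinner by metis

lemma self_adjoint_cinner_real:
  assumes "self_adjoint A"
  shows "cinner x (A *v x) = of_real (Re (cinner x (A *v x)))"
proof -
  have "cinner x (A *v x) = cnj (cinner x (A *v x))"
    using self_adjoint_cinner[OF assms, of x x] cinner_commute[of "A *v x" x] by simp
  then have "Im (cinner x (A *v x)) = 0" by (metis cnj.simps(2) neg_equal_zero)
  then show ?thesis by (simp add: complex_eq_iff)
qed

lemma positive_operator_form_eq_0_imp_eq_0: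
  fixes C :: "'a::real_inner \<Rightarrow> 'a"
  assumes lin: "linear C" and sym: "\<And>x y. inner x (C y) = inner (C x) y"
    and pos: "\<And>x. 0 \<le> inner x (C x)" and x: "inner x (C x) = 0"
  shows "C x = 0"
proof -
  define s where "s = inner (C x) (C x)"
  define c where "c = \<bar>inner (C x) (C (C x))\<bar>"
  have "2 * s \<le> e" if "e > 0" for e
  proof -
    define t where "t = e / (c + 1)"
    have "t > 0" using that by (simp add: t_def c_def add_nonneg_pos)
    have "0 \<le> inner (x - t *\<^sub>R C x) (C (x - t *\<^sub>R C x))" by (rule pos)
    also have "\<dots> = t * (t * inner (C x) (C (C x)) - 2 * s)"
      using x sym[of x "C x"] sym[of "C x" x]
      by (simp add: linear_diff[OF lin] linear_scale[OF lin] inner_diff_left inner_diff_right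
          inner_commute s_def algebra_simps)
    finally have "2 * s \<le> t * inner (C x) (C (C x))"
      using \<open>t > 0\<close> by (simp add: zero_le_mult_iff)
    also have "\<dots> \<le> t * c" using \<open>t > 0\<close> by (simp add: c_def)
    also have "\<dots> \<le> e" using that by (simp add: t_def c_def field_simps)
    finally show ?thesis .
  qed
  then have "s \<le> 0" using field_le_epsilon[of "2 * s" 0] by simp
  then have "s = 0" using inner_ge_zero[of "C x"] unfolding s_def by linarith
  then show ?thesis by (simp add: s_def)
qed

lemma self_adjoint_has_eigenvector:
  assumes sa: "self_adjoint (A :: complex^'n^'n)"
  shows "\<exists>z c. cinner z z = 1 \<and> A *v z = c *s z"
proof -
  define f where "f x = inner x (A *v x)" for x :: "complex^'n"
  have "continuous_on (sphere 0 1) f"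
    unfolding f_def by (intro continuous_intros)
  moreover have "sphere (0::complex^'n) 1 \<noteq> {}" by simp
  ultimately obtain x0 where x0: "x0 \<in> sphere 0 1" and max: "\<And>y. y \<in> sphere 0 1 \<Longrightarrow> f y \<le> f x0"
    using continuous_attains_sup[OF compact_sphere] by blast
  define l where "l = f x0"
  have rayleigh: "f v \<le> l * inner v v" for v
  proof (cases "v = 0")
    case False
    have "f ((1 / norm v) *\<^sub>R v) \<le> l" unfolding l_def using False by (intro max) simp
    then show ?thesis
      using False by (simp add: f_def matrix_vector_scaleR field_simps power2_norm_eq_inner[symmetric]
          power2_eq_square)
  qed (simp add: f_def)
  define C where "C v = l *\<^sub>R v - A *v v" for v
  \<comment> \<open>\<open>l\<close> is the largest Rayleigh quotient, so \<open>C\<close> is positive and its form vanishes at \<open>x0\<close>.\<close>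
  have "C x0 = 0"
  proof (rule positive_operator_form_eq_0_imp_eq_0[of C])
    show "linear C"
      by (rule linearI) (simp_all add: C_def matrix_vector_right_distrib matrix_vector_scaleR algebra_simps)
    show "inner x (C y) = inner (C x) y" for x y
      using self_adjoint_inner[OF sa, of x y] by (simp add: C_def inner_diff_left inner_diff_right inner_commute)
    show "0 \<le> inner x (C x)" for x
      using rayleigh[of x] by (simp add: C_def f_def inner_diff_right)
    show "inner x0 (C x0) = 0"
      using x0 by (simp add: C_def f_def l_def inner_diff_right power2_norm_eq_inner[symmetric])
  qed
  then have "A *v x0 = of_real l *s x0" by (simp add: C_def of_real_scaleC)
  moreover have "cinner x0 x0 = 1" using x0 by (simp add: cinner_self)
  ultimately show ?thesis by blast
qed

lemma exists_unit_orthogonal: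
  fixes U :: "(complex^'n) set"
  assumes "finite U" "card U < CARD('n)"
  shows "\<exists>z. cinner z z = 1 \<and> (\<forall>u\<in>U. cinner u z = 0)"
proof -
  \<comment> \<open>Complex orthogonality to \<open>u\<close> is real orthogonality to \<open>u\<close> and \<open>\<i> u\<close>.\<close>
  define U' where "U' = U \<union> (\<lambda>u. \<i> *s u) ` U"
  have "dim U' \<le> card U'" using assms(1) unfolding U'_def by (intro dim_le_card') auto
  also have "\<dots> \<le> 2 * card U"
    using card_Un_le[of U "(\<lambda>u. \<i> *s u) ` U"] card_image_le[OF assms(1), of "\<lambda>u. \<i> *s u"]
    unfolding U'_def by linarith
  also have "\<dots> < DIM(complex^'n)" using assms(2) by simp
  finally obtain z where z: "z \<noteq> 0" "\<And>y. y \<in> span U' \<Longrightarrow> orthogonal z y"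
    using orthogonal_to_subspace_exists by blast
  have "cinner u z = 0" if "u \<in> U" for u
  proof -
    have "inner u z = 0" "inner (\<i> *s u) z = 0"
      using z(2)[OF span_base, of u] z(2)[OF span_base, of "\<i> *s u"] that
      unfolding U'_def orthogonal_def by (auto simp: inner_commute)
    then show ?thesis by (simp add: complex_eq_iff Re_cinner Im_cinner)
  qed
  moreover have "cinner w w = 1" if "w = complex_of_real (1 / norm z) *s z" for w
    unfolding that of_real_scaleC cinner_self using z(1) by simp
  ultimately show ?thesis by (metis cinner_scaleC_right mult_zero_right)
qed

definition orthonormal_diagonalizing ::
    "(complex^'n^'n) set \<Rightarrow> nat \<Rightarrow> (nat \<Rightarrow> complex^'n) \<Rightarrow> bool"
  where "orthonormal_diagonalizing \<A> N z \<longleftrightarrow>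
    (\<forall>i<N. \<forall>l<N. cinner (z i) (z l) = (if i = l then 1 else 0) \<and>
                 (i \<noteq> l \<longrightarrow> (\<forall>A\<in>\<A>. cinner (z i) (A *v z l) = 0)))"

lemma orthonormal_diagonalizing_fun_upd:
  assumes sa: "\<forall>A\<in>\<A>. self_adjoint A" and z: "orthonormal_diagonalizing \<A> M z"
    and w: "cinner w w = 1" and w_z: "\<And>l. l < M \<Longrightarrow> cinner (z l) w = 0"
    and w_Az: "\<And>A l. A \<in> \<A> \<Longrightarrow> l < M \<Longrightarrow> cinner (A *v z l) w = 0"
  shows "orthonormal_diagonalizing \<A> (Suc M) (z(M := w))"
proof -
  have z_w: "cinner w (z l) = 0" if "l < M" for l
    using w_z[OF that] cinner_commute[of w "z l"] by simp
  have Az_w: "cinner w (A *v z l) = 0" "cinner (z l) (A *v w) = 0" if "A \<in> \<A>" "l < M" for A l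
    using w_Az[OF that] cinner_commute[of w "A *v z l"] self_adjoint_cinner[of A "z l" w] sa that(1)
    by simp_all
  show ?thesis
    unfolding orthonormal_diagonalizing_def
  proof (intro allI impI conjI ballI)
    fix i l A assume il: "i < Suc M" "l < Suc M"
    show "cinner ((z(M := w)) i) ((z(M := w)) l) = (if i = l then 1 else 0)"
      using z il w w_z z_w
      by (cases "i = M"; cases "l = M") (auto simp: orthonormal_diagonalizing_def)
    assume "i \<noteq> l" "A \<in> \<A>"
    then show "cinner ((z(M := w)) i) (A *v (z(M := w)) l) = 0"
      using z il Az_w
      by (cases "i = M"; cases "l = M") (auto simp: orthonormal_diagonalizing_def)
  qed
qed

lemma orthonormal_diagonalizing_extend:
  fixes \<A> :: "(complex^'n^'n) set"
  assumes sa: "\<forall>A\<in>\<A>. self_adjoint A" and "finite \<A>"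
    and A0: "A0 \<in> \<A>" "A0 *v z 0 = c *s z 0"
    and z: "orthonormal_diagonalizing \<A> M z" and "M \<ge> 1"
    and card: "M * (card \<A> + 1) \<le> CARD('n)"
  shows "\<exists>w. orthonormal_diagonalizing \<A> (Suc M) (z(M := w))"
proof -
  define U where "U = z ` {..<M} \<union> (\<lambda>(A, l). A *v z l) ` (\<A> \<times> {..<M} - {(A0, 0)})"
  have "card U \<le> card (z ` {..<M}) + card ((\<lambda>(A, l). A *v z l) ` (\<A> \<times> {..<M} - {(A0, 0)}))"
    unfolding U_def by (rule card_Un_le)
  also have "\<dots> \<le> M + card (\<A> \<times> {..<M} - {(A0, 0)})"
    using \<open>finite \<A>\<close> card_image_le[of "{..<M}" z] by (intro add_mono card_image_le) auto
  also have "card (\<A> \<times> {..<M} - {(A0, 0)}) = card \<A> * M - 1"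
    using A0(1) \<open>M \<ge> 1\<close> \<open>finite \<A>\<close> by (simp add: card_Diff_singleton card_cartesian_product)
  also have "M + (card \<A> * M - 1) < M * (card \<A> + 1)"
  proof -
    have "card \<A> > 0" using A0(1) \<open>finite \<A>\<close> card_gt_0_iff by blast
    then have "M * card \<A> > 0" using \<open>M \<ge> 1\<close> by simp
    then show ?thesis by (simp add: algebra_simps)
  qed
  finally have "card U < CARD('n)" using card by (simp add: algebra_simps)
  moreover have "finite U" unfolding U_def using \<open>finite \<A>\<close> by simp
  ultimately obtain w where w: "cinner w w = 1" "\<forall>u\<in>U. cinner u w = 0"
    using exists_unit_orthogonal by blast
  have w_z: "cinner (z l) w = 0" if "l < M" for l
    using w(2) that unfolding U_def by auto
  \<comment> \<open>The eigenvector \<open>z 0\<close> of \<open>A0\<close> spares one constraint.\<close>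
  have w_Az: "cinner (A *v z l) w = 0" if "A \<in> \<A>" "l < M" for A l
  proof (cases "(A, l) = (A0, 0)")
    case True
    then show ?thesis using A0(2) w_z[OF that(2)] by (simp add: cinner_scaleC_left)
  qed (use w(2) that in \<open>auto simp: U_def\<close>)
  show ?thesis
    using orthonormal_diagonalizing_fun_upd[OF sa z w(1) w_z w_Az] by blast
qed

lemma exists_orthonormal_diagonalizing:
  fixes \<A> :: "(complex^'n^'n) set"
  assumes "\<forall>A\<in>\<A>. self_adjoint A" "finite \<A>" "\<A> \<noteq> {}"
    and "(N - 1) * (card \<A> + 1) \<le> CARD('n)"
  shows "\<exists>z :: nat \<Rightarrow> complex^'n. orthonormal_diagonalizing \<A> N z"
proof -
  obtain A0 where "A0 \<in> \<A>" using assms(3) by blast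
  then obtain z0 c where z0: "cinner z0 z0 = 1" "A0 *v z0 = c *s z0"
    using self_adjoint_has_eigenvector assms(1) by blast
  have "\<exists>z. orthonormal_diagonalizing \<A> N z \<and> z 0 = z0" if "(N - 1) * (card \<A> + 1) \<le> CARD('n)"
    using that
  proof (induction N)
    case (Suc M)
    show ?case
    proof (cases "M = 0")
      case True
      then show ?thesis using z0 by (auto simp: orthonormal_diagonalizing_def)
    next
      case False
      then obtain z where z: "orthonormal_diagonalizing \<A> M z" "z 0 = z0"
        using Suc by (metis diff_Suc_1 diff_le_self le_trans mult_le_mono1)
      then obtain w where "orthonormal_diagonalizing \<A> (Suc M) (z(M := w))"
        using orthonormal_diagonalizing_extend[OF assms(1,2) \<open>A0 \<in> \<A>\<close>, of z c M] z0 False Suc.prems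
        by auto
      moreover have "(z(M := w)) 0 = z0" using z(2) False by simp
      ultimately show ?thesis by blast
    qed
  qed (intro exI[of _ "\<lambda>_. z0"], simp add: orthonormal_diagonalizing_def)
  then show ?thesis using assms(4) by blast
qed

section \<open>Projections onto orthonormal families\<close>

definition outer :: "complex^'n \<Rightarrow> complex^'n \<Rightarrow> complex^'n^'n" where
  "outer x y = (\<chi> i j. x $ i * cnj (y $ j))"

lemma outer_entry [simp]: "outer x y $ i $ j = x $ i * cnj (y $ j)"
  by (simp add: outer_def)

lemma outer_zero_left [simp]: "outer 0 y = 0"
  by (simp add: vec_eq_iff)

lemma outer_mult_outer: "outer a b ** outer c d = outer (cinner b c *s a) d"
  by (simp add: vec_eq_iff matrix_matrix_mult_def cinner_def sum_distrib_left sum_distrib_right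
      mult.commute mult.left_commute)

lemma outer_mult_self_adjoint:
  "self_adjoint B \<Longrightarrow> outer a b ** B = outer a (B *v b)"
  by (simp add: vec_eq_iff matrix_matrix_mult_def matrix_vector_mult_def sum_distrib_left
      self_adjoint_entry mult.commute mult.left_commute)

lemma outer_of_real_left: "outer (complex_of_real c *s x) y = c *\<^sub>R outer x y"
  unfolding vec_eq_iff
  by (simp only: vector_scaleR_component vector_smult_component outer_entry)
    (simp add: scaleR_conv_of_real mult.assoc)

lemma self_adjoint_sum_outer: "self_adjoint (\<Sum>p\<in>S. outer (v p) (v p))"
  unfolding self_adjoint_def cmat_adjoint_def
  by (simp add: vec_eq_iff sum_component mult.commute)

lemma sum_matrix_mult_left: "(\<Sum>p\<in>S. M p) ** (N :: complex^'n^'n) = (\<Sum>p\<in>S. M p ** N)"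
  unfolding vec_eq_iff matrix_matrix_mult_def
  by (simp add: sum_distrib_right sum_component) (intro allI, rule sum.swap)

lemma sum_matrix_mult_right: "(N :: complex^'n^'n) ** (\<Sum>p\<in>S. M p) = (\<Sum>p\<in>S. N ** M p)"
  unfolding vec_eq_iff matrix_matrix_mult_def
  by (simp add: sum_distrib_left sum_component) (intro allI, rule sum.swap)

lemma self_adjoint_mat_1: "self_adjoint (mat 1 :: complex^'n^'n)"
  unfolding self_adjoint_def cmat_adjoint_def by (simp add: vec_eq_iff mat_def)

lemma compression_sum_outer:
  fixes v :: "nat \<Rightarrow> complex^'n"
  assumes sa: "self_adjoint B"
    and diag: "\<And>p q. p < k \<Longrightarrow> q < k \<Longrightarrow>
      cinner (v p) (B *v v q) = (if p = q then complex_of_real c else 0)"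
  defines "P \<equiv> (\<Sum>p<k. outer (v p) (v p))"
  shows "P ** B ** P = c *\<^sub>R P"
proof -
  have "P ** B ** P = (\<Sum>p<k. \<Sum>q<k. outer (v p) (B *v v p) ** outer (v q) (v q))"
    unfolding P_def sum_matrix_mult_left sum_matrix_mult_right outer_mult_self_adjoint[OF sa]
    by (rule sum.swap)
  also have "\<dots> = (\<Sum>p<k. \<Sum>q<k. if q = p then c *\<^sub>R outer (v p) (v p) else 0)"
  proof (intro sum.cong refl)
    fix p q assume "p \<in> {..<k}" "q \<in> {..<k}"
    then have "cinner (B *v v p) (v q) = (if p = q then complex_of_real c else 0)"
      using diag[of p q] self_adjoint_cinner[OF sa, of "v p" "v q"] by simp
    then show "outer (v p) (B *v v p) ** outer (v q) (v q) = (if q = p then c *\<^sub>R outer (v p) (v p) else 0)"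
      by (auto simp: outer_mult_outer outer_of_real_left)
  qed
  also have "\<dots> = c *\<^sub>R P" by (simp add: P_def scaleR_sum_right)
  finally show ?thesis .
qed

definition vconj :: "complex^'n \<Rightarrow> complex^'n" where
  "vconj v = (\<chi> j. cnj (v $ j))"

lemma independent_vconj_orthonormal:
  fixes v :: "nat \<Rightarrow> complex^'n"
  assumes ON: "\<And>p q. p < k \<Longrightarrow> q < k \<Longrightarrow> cinner (v p) (v q) = (if p = q then 1 else 0)"
  shows "inj_on (\<lambda>p. vconj (v p)) {..<k}" "vec.independent ((\<lambda>p. vconj (v p)) ` {..<k})"
proof -
  \<comment> \<open>Pairing with \<open>v q\<close> extracts the \<open>q\<close>-th coefficient.\<close>
  define pair where "pair q u = (\<Sum>j\<in>UNIV. u $ j * v q $ j)" for q and u :: "complex^'n"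
  have pair_vconj: "pair q (vconj (v p)) = (if p = q then 1 else 0)" if "p < k" "q < k" for p q
    using ON[OF that] unfolding pair_def cinner_def vconj_def by simp
  show inj: "inj_on (\<lambda>p. vconj (v p)) {..<k}"
    by (rule inj_onI) (metis lessThan_iff pair_vconj zero_neq_one)
  show "vec.independent ((\<lambda>p. vconj (v p)) ` {..<k})"
    unfolding vec.independent_explicit
  proof (intro conjI allI impI ballI)
    fix c u assume c: "(\<Sum>u\<in>(\<lambda>p. vconj (v p)) ` {..<k}. c u *s u) = 0"
      and "u \<in> (\<lambda>p. vconj (v p)) ` {..<k}"
    then obtain q where q: "q < k" "u = vconj (v q)" by auto
    have "0 = pair q (\<Sum>u\<in>(\<lambda>p. vconj (v p)) ` {..<k}. c u *s u)"
      using c by (simp add: pair_def)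
    also have "\<dots> = (\<Sum>p<k. c (vconj (v p)) * pair q (vconj (v p)))"
      unfolding sum.reindex[OF inj] pair_def
      by (simp add: sum_component sum_distrib_left sum_distrib_right mult.assoc) (rule sum.swap)
    also have "\<dots> = (\<Sum>p<k. if p = q then c u else 0)"
      by (intro sum.cong refl) (use q pair_vconj in auto)
    also have "\<dots> = c u" using q by simp
    finally show "c u = 0" by simp
  qed simp
qed

lemma row_sum_outer: "row i (\<Sum>p<k. outer (v p) (v p)) = (\<Sum>p<k. v p $ i *s vconj (v p))"
  unfolding vconj_def row_def by (simp add: vec_eq_iff sum_component)

lemma vconj_as_row_combination:
  fixes v :: "nat \<Rightarrow> complex^'n"
  assumes ON: "\<And>p q. p < k \<Longrightarrow> q < k \<Longrightarrow> cinner (v p) (v q) = (if p = q then 1 else 0)"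
    and "q < k"
  shows "(\<Sum>i\<in>UNIV. cnj (v q $ i) *s row i (\<Sum>p<k. outer (v p) (v p))) = vconj (v q)"
  unfolding vec_eq_iff
proof
  fix j
  have "(\<Sum>i\<in>UNIV. cnj (v q $ i) *s row i (\<Sum>p<k. outer (v p) (v p))) $ j
      = (\<Sum>i\<in>UNIV. \<Sum>p<k. cnj (v q $ i) * (v p $ i * cnj (v p $ j)))"
    unfolding row_sum_outer by (simp add: sum_component sum_distrib_left vconj_def)
  also have "\<dots> = (\<Sum>p<k. \<Sum>i\<in>UNIV. cnj (v q $ i) * v p $ i * cnj (v p $ j))"
    by (subst sum.swap) (simp add: mult.assoc)
  also have "\<dots> = (\<Sum>p<k. cinner (v q) (v p) * cnj (v p $ j))"
    unfolding cinner_def by (simp add: sum_distrib_right)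
  also have "\<dots> = (\<Sum>p<k. if p = q then cnj (v p $ j) else 0)"
    by (intro sum.cong refl) (use ON \<open>q < k\<close> in auto)
  also have "\<dots> = vconj (v q) $ j" using \<open>q < k\<close> by (simp add: vconj_def)
  finally show "(\<Sum>i\<in>UNIV. cnj (v q $ i) *s row i (\<Sum>p<k. outer (v p) (v p))) $ j = vconj (v q) $ j" .
qed

lemma rank_sum_outer_orthonormal:
  fixes v :: "nat \<Rightarrow> complex^'n"
  assumes ON: "\<And>p q. p < k \<Longrightarrow> q < k \<Longrightarrow> cinner (v p) (v q) = (if p = q then 1 else 0)"
  shows "rank (\<Sum>p<k. outer (v p) (v p)) = k"
proof -
  define P where "P = (\<Sum>p<k. outer (v p) (v p))"
  define Y where "Y = (\<lambda>p. vconj (v p)) ` {..<k}"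
  have "row i P \<in> vec.span Y" for i
    unfolding P_def row_sum_outer Y_def by (intro vec.span_sum vec.span_scale vec.span_base) auto
  then have rows_Y: "rows P \<subseteq> vec.span Y" unfolding rows_def by auto
  have Y_rows: "Y \<subseteq> vec.span (rows P)"
  proof
    fix u assume "u \<in> Y"
    then obtain q where q: "q < k" "u = vconj (v q)" unfolding Y_def by auto
    have "(\<Sum>i\<in>UNIV. cnj (v q $ i) *s row i P) \<in> vec.span (rows P)"
      by (intro vec.span_sum vec.span_scale vec.span_base) (auto simp: rows_def)
    then show "u \<in> vec.span (rows P)"
      using vconj_as_row_combination[OF ON q(1)] q(2) by (simp add: P_def)
  qed
  have "rank P = vec.dim (vec.span (rows P))" by (simp add: row_rank_def_gen)
  also have "\<dots> = card Y"
    using independent_vconj_orthonormal(2)[OF ON] rows_Y Y_rows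
      vec.span_minimal[OF rows_Y vec.subspace_span]
    unfolding Y_def by (intro vec.basis_card_eq_dim[symmetric]) auto
  also have "\<dots> = k"
    using independent_vconj_orthonormal(1)[OF ON] unfolding Y_def by (simp add: card_image)
  finally show ?thesis unfolding P_def .
qed

lemma joint_rank_k_numrange_memberI:
  fixes v :: "nat \<Rightarrow> complex^'n"
  assumes "\<forall>A \<in> set As. self_adjoint A" and "length a = length As"
    and ON: "\<And>p q. p < k \<Longrightarrow> q < k \<Longrightarrow> cinner (v p) (v q) = (if p = q then 1 else 0)"
    and diag: "\<And>j p q. j < length As \<Longrightarrow> p < k \<Longrightarrow> q < k \<Longrightarrow>
      cinner (v p) (As ! j *v v q) = (if p = q then complex_of_real (a ! j) else 0)"
  shows "a \<in> joint_rank_k_numrange k As"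
proof -
  define P where "P = (\<Sum>p<k. outer (v p) (v p))"
  have "P ** P = P"
    using compression_sum_outer[OF self_adjoint_mat_1, of k v 1] ON by (simp add: P_def)
  moreover have "P ** (As ! j) ** P = (a ! j) *\<^sub>R P" if "j < length As" for j
    using compression_sum_outer[of "As ! j" k v "a ! j"] assms(1) diag[OF that] that
    by (simp add: P_def)
  moreover have "self_adjoint P" "rank P = k"
    unfolding P_def by (rule self_adjoint_sum_outer, rule rank_sum_outer_orthonormal[OF ON])
  ultimately show ?thesis
    using assms(2) unfolding joint_rank_k_numrange_def orth_projection_def by blast
qed

lemma cinner_grouped_combination:
  fixes z :: "nat \<Rightarrow> complex^'n" and lam d :: "nat \<Rightarrow> real" and g :: "nat \<Rightarrow> 'p"
  assumes diag: "\<And>i l. i < N \<Longrightarrow> l < N \<Longrightarrow>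
      cinner (z i) (B *v z l) = (if i = l then complex_of_real (d i) else 0)"
    and lam: "\<And>i. i < N \<Longrightarrow> 0 \<le> lam i"
  defines "v p \<equiv> \<Sum>i | i < N \<and> g i = p. complex_of_real (sqrt (lam i)) *s z i"
  shows "cinner (v p) (B *v v q) =
    (if p = q then complex_of_real (\<Sum>i | i < N \<and> g i = p. lam i * d i) else 0)"
proof -
  define G where "G p = {i. i < N \<and> g i = p}" for p
  have "cinner (v p) (B *v v q) = (\<Sum>i\<in>G p. \<Sum>l\<in>G q.
      complex_of_real (sqrt (lam i)) * complex_of_real (sqrt (lam l)) * cinner (z i) (B *v z l))"
    unfolding v_def G_def
    by (simp add: cinner_sum_left cinner_sum_right matrix_vector_sum matrix_vector_scaleC
        cinner_scaleC_left cinner_scaleC_right sum_distrib_left mult.assoc)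
      (subst sum.swap, simp add: mult.left_commute)
  also have "\<dots> = (\<Sum>i\<in>G p. \<Sum>l\<in>G q. if l = i then complex_of_real (lam i * d i) else 0)"
  proof (intro sum.cong refl)
    fix i l assume "i \<in> G p" "l \<in> G q"
    then have "i < N" "l < N" by (auto simp: G_def)
    then show "complex_of_real (sqrt (lam i)) * complex_of_real (sqrt (lam l)) * cinner (z i) (B *v z l)
        = (if l = i then complex_of_real (lam i * d i) else 0)"
      using diag lam[of i] by (simp flip: of_real_mult)
  qed
  also have "\<dots> = (\<Sum>i\<in>G p \<inter> G q. complex_of_real (lam i * d i))"
    using finite_subset[of "G _" "{..<N}"]
    by (simp add: sum.delta sum.inter_restrict G_def subset_iff cong: if_cong)
  also have "\<dots> = (if p = q then complex_of_real (\<Sum>i | i < N \<and> g i = p. lam i * d i) else 0)"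
  proof -
    have "G p \<inter> G q = (if p = q then G p else {})" by (auto simp: G_def)
    then show ?thesis by (simp add: G_def)
  qed
  finally show ?thesis .
qed

lemma cinner_grouped_combination_orthonormal:
  fixes z :: "nat \<Rightarrow> complex^'n" and lam :: "nat \<Rightarrow> real" and g :: "nat \<Rightarrow> 'p"
  assumes "\<And>i l. i < N \<Longrightarrow> l < N \<Longrightarrow> cinner (z i) (z l) = (if i = l then 1 else 0)"
    and "\<And>i. i < N \<Longrightarrow> 0 \<le> lam i"
  defines "v p \<equiv> \<Sum>i | i < N \<and> g i = p. complex_of_real (sqrt (lam i)) *s z i"
  shows "cinner (v p) (v q) = (if p = q then complex_of_real (\<Sum>i | i < N \<and> g i = p. lam i) else 0)"
  using cinner_grouped_combination[of N z "mat 1" "\<lambda>_. 1" lam g p q] assms by simp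

lemma exists_orthonormal_diagonalizing_list:
  fixes As :: "(complex^'n^'n) list"
  assumes "\<forall>A \<in> set As. self_adjoint A" "As \<noteq> []" "(N - 1) * (length As + 1) \<le> CARD('n)"
  obtains z :: "nat \<Rightarrow> complex^'n" where
    "\<And>i l. i < N \<Longrightarrow> l < N \<Longrightarrow> cinner (z i) (z l) = (if i = l then 1 else 0)"
    "\<And>r i l. r < length As \<Longrightarrow> i < N \<Longrightarrow> l < N \<Longrightarrow> cinner (z i) (As ! r *v z l) =
       (if i = l then complex_of_real (Re (cinner (z i) (As ! r *v z i))) else 0)"
proof -
  have "(N - 1) * (card (set As) + 1) \<le> CARD('n)"
    using assms(3) card_length[of As] by (meson add_le_mono1 le_trans mult_le_mono2)
  then obtain z :: "nat \<Rightarrow> complex^'n" where z: "orthonormal_diagonalizing (set As) N z"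
    using exists_orthonormal_diagonalizing[OF assms(1) finite_set] assms(2) by blast
  show ?thesis
  proof
    show "cinner (z i) (z l) = (if i = l then 1 else 0)" if "i < N" "l < N" for i l
      using z that unfolding orthonormal_diagonalizing_def by simp
    show "cinner (z i) (As ! r *v z l) =
        (if i = l then complex_of_real (Re (cinner (z i) (As ! r *v z i))) else 0)"
      if "r < length As" "i < N" "l < N" for r i l
      using z that assms(1) self_adjoint_cinner_real[of "As ! r" "z i"]
      unfolding orthonormal_diagonalizing_def by (auto simp: nth_mem)
  qed
qed

theorem proposition2p4:
  fixes As :: "(complex^'n^'n) list" and m k :: nat
  assumes "length As = m" and "m \<ge> 1" and "k > 1"
    and "\<forall>A \<in> set As. self_adjoint A"
    and "CARD('n) \<ge> (k - 1) * (m + 1)^2"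
  shows "joint_rank_k_numrange k As \<noteq> {}"
proof -
  define N where "N = (k - 1) * (m + 1) + 1"
  have "(N - 1) * (m + 1) = (k - 1) * (m + 1)^2"
    unfolding N_def by (simp only: diff_add_inverse2 power2_eq_square mult.assoc)
  then have card_N: "(N - 1) * (m + 1) \<le> CARD('n)" using assms(5) by simp
  have card_k: "(k - 1) * (m + 1) \<le> CARD('n)"
    by (rule le_trans[OF _ card_N]) (simp add: N_def)
  obtain z :: "nat \<Rightarrow> complex^'n" where orthonormal:
      "\<And>i l. i < N \<Longrightarrow> l < N \<Longrightarrow> cinner (z i) (z l) = (if i = l then 1 else 0)"
    and diagonal: "\<And>r i l. r < m \<Longrightarrow> i < N \<Longrightarrow> l < N \<Longrightarrow> cinner (z i) (As ! r *v z l) =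
       (if i = l then complex_of_real (Re (cinner (z i) (As ! r *v z i))) else 0)"
    using exists_orthonormal_diagonalizing_list[OF assms(4) _ card_N[folded assms(1)]] assms(1,2)
    by (metis list.size(3) not_one_le_zero)
  obtain g lam a where tv: "\<forall>i<N. g i < k \<and> lam i \<ge> 0"
    "\<forall>j<k. (\<Sum>i | i < N \<and> g i = j. lam i) = 1 \<and>
       (\<forall>r<m. (\<Sum>i | i < N \<and> g i = j. lam i * Re (cinner (z i) (As ! r *v z i))) = a r)"
    using tverberg[OF _ card_k, of "\<lambda>i r. Re (cinner (z i) (As ! r *v z i))"] assms(3)
    unfolding N_def by auto
  define v where "v p = (\<Sum>i | i < N \<and> g i = p. complex_of_real (sqrt (lam i)) *s z i)" for p
  have "map a [0..<m] \<in> joint_rank_k_numrange k As"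
  proof (rule joint_rank_k_numrange_memberI[where v = v])
    show "cinner (v p) (v q) = (if p = q then 1 else 0)" if "p < k" "q < k" for p q
      using cinner_grouped_combination_orthonormal[OF orthonormal, where lam = lam and g = g] tv that
      unfolding v_def by simp
    show "cinner (v p) (As ! r *v v q) = (if p = q then complex_of_real (map a [0..<m] ! r) else 0)"
      if "r < length As" "p < k" "q < k" for r p q
      using cinner_grouped_combination[OF diagonal[of r], where lam = lam and g = g] tv that assms(1)
      unfolding v_def by simp
  qed (use assms(1,4) in simp_all)
  then show ?thesis by blast
qed

end
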